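(* Let $r\in\mathbb{R}$. For all integers $n,m,k \geq 0$ with $n \geq m+k$, \[ \binom{m+k}{m} S_{2,r}(n,m+k) = \sum_{l=m}^n \binom{n}{l} S_{2,r}(l,m)\, S_{2,r}(n-l,k). \]
   Context: For $r\in\mathbb{R}$ and integer $k\ge 0$, the extended Stirling numbers of the second kind $S_{2,r}(n,k)$ are defined by \[ \frac{1}{k!}(e^t-1+rt)^k = \sum_{n=k}^\infty S_{2,r}(n,k)\frac{t^n}{n!}, \] with $S_{2,r}(a,b)=0$ whenever $a<b$. *)

theory Defs
  imports "HOL-Computational_Algebra.Formal_Power_Series"
begin

definition S2r :: "real \<Rightarrow> nat \<Rightarrow> nat \<Rightarrow> real" where
  "S2r r n k = fact n * fps_nth (fps_const (1 / fact k) *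
      (fps_exp 1 - 1 + fps_const r * fps_X) ^ k) n"

end

theory Submission
  imports Defs
begin

text \<open>Let \<open>F = e\<^sup>t - 1 + r t\<close>. The identity is the coefficient of \<open>t\<^sup>n / n!\<close> in
  \<open>(F\<^sup>m / m!) (F\<^sup>k / k!) = binom(m+k, m) F\<^sup>m\<^sup>+\<^sup>k / (m+k)!\<close>: a product of exponential
  generating functions gives the binomial convolution of their coefficient sequences. The sum
  starts at \<open>l = m\<close> because \<open>F\<close> has no constant term, so \<open>F\<^sup>m\<close> has no coefficients below \<open>t\<^sup>m\<close>.\<close>

definition fps_divided_power :: "nat \<Rightarrow> 'a::field_char_0 fps \<Rightarrow> 'a fps" where
  "fps_divided_power k f = fps_const (1 / fact k) * f ^ k"

lemma fps_power_nth_eq_0: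
  fixes f :: "'a::comm_semiring_1 fps"
  assumes "fps_nth f 0 = 0" "j < k"
  shows "fps_nth (f ^ k) j = 0"
proof (cases "f = 0")
  case True
  then show ?thesis using assms(2) by (cases k) auto
next
  case False
  with assms(1) have "subdegree f \<noteq> 0" by (simp add: subdegree_eq_0_iff)
  with assms(2) have "j < k * subdegree f"
    by (metis le_less_trans less_one linorder_not_le mult.right_neutral mult_le_cancel1 not_gr_zero)
  then show ?thesis by (rule fps_pow_nth_below_subdegree)
qed

lemma fps_divided_power_nth_eq_0:
  assumes "fps_nth f 0 = 0" "j < k"
  shows "fps_nth (fps_divided_power k f) j = 0"
  using fps_power_nth_eq_0[OF assms] by (simp add: fps_divided_power_def)

lemma fps_divided_power_mult:
  fixes f :: "'a::field_char_0 fps"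
  shows "fps_divided_power m f * fps_divided_power k f =
         fps_const (of_nat ((m + k) choose m)) * fps_divided_power (m + k) f"
proof -
  have "1 / fact m * (1 / fact k) = (of_nat ((m + k) choose m) * (1 / fact (m + k)) :: 'a)"
    by (simp add: binomial_fact field_simps)
  then have "fps_const (1 / fact m) * fps_const (1 / fact k) =
             fps_const (of_nat ((m + k) choose m)) * (fps_const (1 / fact (m + k)) :: 'a fps)"
    by (simp only: fps_const_mult)
  then show ?thesis
    by (simp add: fps_divided_power_def power_add ac_simps)
qed

lemma fact_mult_fps_mult_nth:
  fixes f g :: "'a::{comm_semiring_1,semiring_char_0} fps"
  shows "fact n * fps_nth (f * g) n =
         (\<Sum>j = 0..n. of_nat (n choose j) * (fact j * fps_nth f j) * (fact (n - j) * fps_nth g (n - j)))"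
proof -
  have "fact n = (fact j * fact (n - j) * of_nat (n choose j) :: 'a)" if "j \<le> n" for j
    using binomial_fact_lemma[OF that] by (metis of_nat_fact of_nat_mult)
  then show ?thesis
    by (simp add: fps_mult_nth sum_distrib_left ac_simps)
qed

lemma S2r_conv_fps_divided_power:
  "S2r r n k = fact n * fps_nth (fps_divided_power k (fps_exp 1 - 1 + fps_const r * fps_X)) n"
  by (simp add: S2r_def fps_divided_power_def)

lemma S2r_eq_0:
  assumes "n < k"
  shows "S2r r n k = 0"
  by (simp add: S2r_conv_fps_divided_power fps_divided_power_nth_eq_0 assms)

theorem theorem5:
  fixes r :: real and n m k :: nat
  assumes "n \<ge> m + k"
  shows "real ((m + k) choose m) * S2r r n (m + k) =
         (\<Sum>l = m..n. real (n choose l) * S2r r l m * S2r r (n - l) k)"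
proof -
  define F :: "real fps" where "F = fps_exp 1 - 1 + fps_const r * fps_X"
  have "real ((m + k) choose m) * S2r r n (m + k) =
        fact n * fps_nth (fps_divided_power m F * fps_divided_power k F) n"
    by (simp add: fps_divided_power_mult S2r_conv_fps_divided_power F_def)
  also have "\<dots> = (\<Sum>l = 0..n. real (n choose l) * S2r r l m * S2r r (n - l) k)"
    by (simp add: fact_mult_fps_mult_nth S2r_conv_fps_divided_power F_def)
  also have "\<dots> = (\<Sum>l = m..n. real (n choose l) * S2r r l m * S2r r (n - l) k)"
  proof -
    have "{0..n} = {0..<m} \<union> {m..n}" using assms by auto
    then show ?thesis
      by (simp only:) (subst sum.union_disjoint, auto simp: S2r_eq_0)
  qed
  finally show ?thesis .
qed

end
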